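(* Consider $K$ sensors, each taking a binary decision $b_k\in\{0,1\}$, $k=1,\dots,K$, with conditionally i.i.d. decisions satisfying $P_D\triangleq P(b_k=1\mid\mathcal H_1)>P_F\triangleq P(b_k=1\mid\mathcal H_0)$. Each decision is sent over a binary symmetric channel with bit-error probability $P_{e,k}\le \tfrac12$, and the fusion center observes $y_k\in\{0,1\}$, with $y_k=b_k$ with probability $1-P_{e,k}$ and $y_k=1-b_k$ with probability $P_{e,k}$. For $P_1\in[0,1]$ let $\alpha_k(P_1)=(1-2P_{e,k})P_1+P_{e,k}$ and $\beta_k(P_1)=1-\alpha_k(P_1)$. Consider the statistics $$\Lambda_{\mathrm{LRT}}=\sum_{k=1}^K\Big\{y_k\ln\frac{\alpha_k(P_D)}{\alpha_k(P_F)}+(1-y_k)\ln\frac{\beta_k(P_D)}{\beta_k(P_F)}\Big\},\qquad \Lambda_{\mathrm{IS}}=\sum_{k=1}^K(2y_k-1)\ln\frac{1-P_{e,k}}{P_{e,k}},$$ $$\Lambda_{\mathrm{LOD}}=\Big(\sum_{k=1}^K\frac{(1-2P_{e,k})[(y_k-P_{e,k})-(1-2P_{e,k})P_F]}{\alpha_k(P_F)\beta_k(P_F)}\Big)\Big(\sum_{k=1}^K\frac{(1-2P_{e,k})^2}{\alpha_k(P_F)\beta_k(P_F)}\Big)^{-1/2},$$ $$\Lambda_{\mathrm{Wu}}=\hat P_D-P_F,\quad \hat P_D=\frac1K\sum_{k=1}^K[(1+2P_{e,k})y_k-P_{e,k}].$$ Then, when the SNR is low at each link (i.e. each $P_{e,k}$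 is close to $\tfrac12$, so that each per-sensor coefficient of the statistics may be replaced by its first-order Taylor expansion around $P_{e,k}=\tfrac12$), $\Lambda_{\mathrm{IS}}$ and $\Lambda_{\mathrm{LOD}}$ approach $\Lambda_{\mathrm{LRT}}$ (their low-SNR approximations are equivalent to that of $\Lambda_{\mathrm{LRT}}$, hence yield the same detection performance), while $\Lambda_{\mathrm{Wu}}$ does not. The $P_{e,k}$ need not be equal.
   Context: Two statistics are called equivalent if they are equal up to a scaling factor and an additive term, both finite and independent of $\boldsymbol y=(y_1,\dots,y_K)$, so that threshold tests based on them have the same performance. Low SNR at link $k$ corresponds to $P_{e,k}\to\tfrac12$. Each statistic is used in a test comparing it with a threshold to decide between $\mathcal H_0$ and $\mathcal H_1$. *)

theory Defs
  imports "HOL-Analysis.Analysis"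
begin

definition alpha_ch :: "real \<Rightarrow> real \<Rightarrow> real" where
  "alpha_ch p P1 = (1 - 2 * p) * P1 + p"

definition beta_ch :: "real \<Rightarrow> real \<Rightarrow> real" where
  "beta_ch p P1 = 1 - alpha_ch p P1"

definition lowsnr :: "(real \<Rightarrow> real) \<Rightarrow> real \<Rightarrow> real" where
  "lowsnr g p = g (1/2) + deriv g (1/2) * (p - 1/2)"

definition lrt_term :: "real \<Rightarrow> real \<Rightarrow> real \<Rightarrow> real \<Rightarrow> real" where
  "lrt_term PD PF yk p =
     yk * ln (alpha_ch p PD / alpha_ch p PF) + (1 - yk) * ln (beta_ch p PD / beta_ch p PF)"

definition is_term :: "real \<Rightarrow> real \<Rightarrow> real" where
  "is_term yk p = (2 * yk - 1) * ln ((1 - p) / p)"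

definition lod_term :: "real \<Rightarrow> real \<Rightarrow> real \<Rightarrow> real" where
  "lod_term PF yk p =
     (1 - 2 * p) * ((yk - p) - (1 - 2 * p) * PF) / (alpha_ch p PF * beta_ch p PF)"

definition lod_norm :: "nat \<Rightarrow> real \<Rightarrow> (nat \<Rightarrow> real) \<Rightarrow> real" where
  "lod_norm K PF pe = (\<Sum>k<K. (1 - 2 * pe k)^2 / (alpha_ch (pe k) PF * beta_ch (pe k) PF))"

definition wu_term :: "nat \<Rightarrow> real \<Rightarrow> real \<Rightarrow> real" where
  "wu_term K yk p = ((1 + 2 * p) * yk - p) / real K"

text \<open>Exact statistics (sensors indexed 0..K-1).\<close>
definition Lambda_LRT :: "nat \<Rightarrow> real \<Rightarrow> real \<Rightarrow> (nat \<Rightarrow> real) \<Rightarrow> (nat \<Rightarrow> real) \<Rightarrow> real" where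
  "Lambda_LRT K PD PF pe y = (\<Sum>k<K. lrt_term PD PF (y k) (pe k))"

definition Lambda_IS :: "nat \<Rightarrow> (nat \<Rightarrow> real) \<Rightarrow> (nat \<Rightarrow> real) \<Rightarrow> real" where
  "Lambda_IS K pe y = (\<Sum>k<K. is_term (y k) (pe k))"

definition Lambda_LOD :: "nat \<Rightarrow> real \<Rightarrow> (nat \<Rightarrow> real) \<Rightarrow> (nat \<Rightarrow> real) \<Rightarrow> real" where
  "Lambda_LOD K PF pe y = (\<Sum>k<K. lod_term PF (y k) (pe k)) / sqrt (lod_norm K PF pe)"

definition Lambda_Wu :: "nat \<Rightarrow> real \<Rightarrow> (nat \<Rightarrow> real) \<Rightarrow> (nat \<Rightarrow> real) \<Rightarrow> real" where
  "Lambda_Wu K PF pe y = (\<Sum>k<K. wu_term K (y k) (pe k)) - PF"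

text \<open>Low-SNR approximations: each per-sensor coefficient is replaced by its first-order
  Taylor expansion around P_{e,k} = 1/2; y-independent global factors
  (the LOD normaliser and the constant -P_F of Wu) are kept unchanged.\<close>
definition LRT_low :: "nat \<Rightarrow> real \<Rightarrow> real \<Rightarrow> (nat \<Rightarrow> real) \<Rightarrow> (nat \<Rightarrow> real) \<Rightarrow> real" where
  "LRT_low K PD PF pe y = (\<Sum>k<K. lowsnr (lrt_term PD PF (y k)) (pe k))"

definition IS_low :: "nat \<Rightarrow> (nat \<Rightarrow> real) \<Rightarrow> (nat \<Rightarrow> real) \<Rightarrow> real" where
  "IS_low K pe y = (\<Sum>k<K. lowsnr (is_term (y k)) (pe k))"

definition LOD_low :: "nat \<Rightarrow> real \<Rightarrow> (nat \<Rightarrow> real) \<Rightarrow> (nat \<Rightarrow> real) \<Rightarrow> real" where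
  "LOD_low K PF pe y = (\<Sum>k<K. lowsnr (lod_term PF (y k)) (pe k)) / sqrt (lod_norm K PF pe)"

definition Wu_low :: "nat \<Rightarrow> real \<Rightarrow> (nat \<Rightarrow> real) \<Rightarrow> (nat \<Rightarrow> real) \<Rightarrow> real" where
  "Wu_low K PF pe y = (\<Sum>k<K. lowsnr (wu_term K (y k)) (pe k)) - PF"

definition equiv_stat :: "nat \<Rightarrow> ((nat \<Rightarrow> real) \<Rightarrow> real) \<Rightarrow> ((nat \<Rightarrow> real) \<Rightarrow> real) \<Rightarrow> bool" where
  "equiv_stat K S T \<longleftrightarrow>
     (\<exists>a b. a \<noteq> 0 \<and> (\<forall>y. (\<forall>k<K. y k \<in> {0, 1}) \<longrightarrow> S y = a * T y + b))"

end

theory Submission imports Defs begin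

text \<open>At p = 1/2 the log-likelihood ratios of both channels degenerate, and the first-order
  coefficient of every LRT term is 2 (P_D - P_F)(2y - 1)(1 - 2p); the IS and LOD terms
  linearize to 2(2y - 1)(1 - 2p), so all three low-SNR statistics are proportional.
  The Wu term is affine in p, hence equal to its own linearization; an equivalence with the
  LRT would force the weights (1 + 2p_k)/K to be proportional to 1 - 2p_k, which determines
  p_k uniquely, so the weights fail to match as soon as two error probabilities differ.\<close>

lemma lowsnr_eq_DERIV:
  "(g has_real_derivative D) (at (1/2)) \<Longrightarrow> lowsnr g p = g (1/2) + D * (p - 1/2)"
  unfolding lowsnr_def by (simp add: DERIV_imp_deriv)

lemma lowsnr_lrt_term: "lowsnr (lrt_term PD PF y) p = 2 * (PD - PF) * (2 * y - 1) * (1 - 2 * p)"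
proof -
  have "(lrt_term PD PF y has_real_derivative 4 * (PD - PF) * (1 - 2 * y)) (at (1/2))"
    unfolding lrt_term_def[abs_def] beta_ch_def alpha_ch_def
    by ((rule derivative_eq_intros refl | simp)+, simp add: field_simps)
  from lowsnr_eq_DERIV[OF this, of p] show ?thesis
    by (simp add: lrt_term_def alpha_ch_def beta_ch_def algebra_simps)
qed

lemma lowsnr_is_term: "lowsnr (is_term y) p = 2 * (2 * y - 1) * (1 - 2 * p)"
proof -
  have "(is_term y has_real_derivative -4 * (2 * y - 1)) (at (1/2))"
    unfolding is_term_def[abs_def] by (rule derivative_eq_intros refl | simp)+
  from lowsnr_eq_DERIV[OF this] show ?thesis by (simp add: is_term_def algebra_simps)
qed

lemma lowsnr_lod_term: "lowsnr (lod_term PF y) p = 2 * (2 * y - 1) * (1 - 2 * p)"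
proof -
  have "(lod_term PF y has_real_derivative -4 * (2 * y - 1)) (at (1/2))"
    unfolding lod_term_def[abs_def] beta_ch_def alpha_ch_def
    by (rule derivative_eq_intros refl | simp)+
  from lowsnr_eq_DERIV[OF this] show ?thesis
    by (simp add: lod_term_def alpha_ch_def beta_ch_def algebra_simps)
qed

lemma lowsnr_wu_term: "K > 0 \<Longrightarrow> lowsnr (wu_term K y) p = wu_term K y p"
proof -
  assume "K > 0"
  then have "(wu_term K y has_real_derivative (2 * y - 1) / real K) (at (1/2))"
    unfolding wu_term_def[abs_def] by (auto intro!: derivative_eq_intros simp: field_simps)
  from lowsnr_eq_DERIV[OF this, of p] \<open>K > 0\<close> show ?thesis
    by (simp add: wu_term_def divide_simps) (simp add: algebra_simps)
qed

lemma LRT_low_eq_scaled_IS_low: "LRT_low K PD PF pe y = (PD - PF) * IS_low K pe y"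
  unfolding LRT_low_def IS_low_def lowsnr_lrt_term lowsnr_is_term sum_distrib_left
  by (rule sum.cong) (auto simp: algebra_simps)

lemma LOD_low_eq_IS_low: "LOD_low K PF pe y = IS_low K pe y / sqrt (lod_norm K PF pe)"
  unfolding LOD_low_def IS_low_def lowsnr_lod_term lowsnr_is_term ..

lemma alpha_beta_ch_pos:
  assumes "0 < p" "p \<le> 1/2" "0 \<le> P" "P \<le> 1"
  shows "alpha_ch p P * beta_ch p P > 0"
proof -
  have "p \<le> alpha_ch p P"
    using assms mult_nonneg_nonneg[of "1 - 2 * p" P] unfolding alpha_ch_def by linarith
  moreover have "(1 - 2 * p) * P \<le> 1 - 2 * p" using assms by (intro mult_left_le) auto
  then have "alpha_ch p P \<le> 1 - p" unfolding alpha_ch_def by linarith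
  ultimately show ?thesis using assms unfolding beta_ch_def by (intro mult_pos_pos) auto
qed

lemma lod_norm_eq_0_imp:
  assumes "lod_norm K PF pe = 0" "0 \<le> PF" "PF \<le> 1" "\<forall>k<K. 0 < pe k \<and> pe k \<le> 1/2"
    and "k < K"
  shows "pe k = 1/2"
proof -
  have pos: "alpha_ch (pe k) PF * beta_ch (pe k) PF > 0" if "k < K" for k
    using assms that by (intro alpha_beta_ch_pos) auto
  then have "\<forall>k\<in>{..<K}. (1 - 2 * pe k)^2 / (alpha_ch (pe k) PF * beta_ch (pe k) PF) = 0"
    using assms(1) unfolding lod_norm_def
    by (subst sum_nonneg_eq_0_iff[symmetric]) (auto intro: divide_nonneg_pos less_imp_le)
  then have "(1 - 2 * pe k)^2 / (alpha_ch (pe k) PF * beta_ch (pe k) PF) = 0"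
    using \<open>k < K\<close> by blast
  with pos[OF \<open>k < K\<close>] show ?thesis by auto
qed

text \<open>The normaliser of LOD vanishes only when every link is pure noise; then the IS
  statistic vanishes too, so LOD is a nonzero multiple of IS in every case.\<close>
lemma LOD_low_scaled_IS_low:
  assumes "0 \<le> PF" "PF \<le> 1" "\<forall>k<K. 0 < pe k \<and> pe k \<le> 1/2"
  obtains c where "c \<noteq> 0" "\<And>y. LOD_low K PF pe y = c * IS_low K pe y"
proof (cases "lod_norm K PF pe = 0")
  case True
  then have "IS_low K pe y = 0" for y
    unfolding IS_low_def lowsnr_is_term
    by (intro sum.neutral) (simp add: lod_norm_eq_0_imp[OF True assms])
  with that[of 1] show ?thesis by (simp add: LOD_low_eq_IS_low)
next
  case False
  with that[of "1 / sqrt (lod_norm K PF pe)"] show ?thesis by (simp add: LOD_low_eq_IS_low)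
qed

lemma equiv_stat_scaled: "c \<noteq> 0 \<Longrightarrow> (\<And>y. S y = c * T y) \<Longrightarrow> equiv_stat K S T"
  unfolding equiv_stat_def by (intro exI[of _ c] exI[of _ 0]) simp

lemma equiv_stat_increments:
  assumes "equiv_stat K S T"
  obtains a where "a \<noteq> 0"
    "\<And>i. i < K \<Longrightarrow> S (\<lambda>k. if k = i then 1 else 0) - S (\<lambda>_. 0)
                      = a * (T (\<lambda>k. if k = i then 1 else 0) - T (\<lambda>_. 0))"
proof -
  obtain a b where "a \<noteq> 0" and ab: "\<And>y. \<forall>k<K. y k \<in> {0, 1} \<Longrightarrow> S y = a * T y + b"
    using assms unfolding equiv_stat_def by blast
  show ?thesis
    by (rule that[OF \<open>a \<noteq> 0\<close>]) (simp add: ab algebra_simps)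
qed

lemma sum_lessThan_flip_one:
  fixes f :: "nat \<Rightarrow> real \<Rightarrow> real"
  assumes "i < K"
  shows "(\<Sum>k<K. f k (if k = i then 1 else 0)) - (\<Sum>k<K. f k 0) = f i 1 - f i 0"
proof -
  have "(\<Sum>k<K. f k (if k = i then 1 else 0)) - (\<Sum>k<K. f k 0)
        = (\<Sum>k<K. if k = i then f i 1 - f i 0 else 0)"
    by (subst sum_subtractf[symmetric]) (rule sum.cong, auto)
  also have "\<dots> = f i 1 - f i 0" using assms by simp
  finally show ?thesis .
qed

lemma Wu_low_increment:
  assumes "i < K"
  shows "Wu_low K PF pe (\<lambda>k. if k = i then 1 else 0) - Wu_low K PF pe (\<lambda>_. 0)
           = (1 + 2 * pe i) / real K"
proof -
  have "K > 0" using assms by simp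
  then show ?thesis
    unfolding Wu_low_def lowsnr_wu_term[OF \<open>K > 0\<close>]
    using sum_lessThan_flip_one[OF assms, of "\<lambda>k y. wu_term K y (pe k)"]
    by (simp add: wu_term_def diff_divide_distrib add_divide_distrib algebra_simps)
qed

lemma LRT_low_increment:
  "i < K \<Longrightarrow> LRT_low K PD PF pe (\<lambda>k. if k = i then 1 else 0) - LRT_low K PD PF pe (\<lambda>_. 0)
             = 4 * (PD - PF) * (1 - 2 * pe i)"
  unfolding LRT_low_def lowsnr_lrt_term
  using sum_lessThan_flip_one[of i K "\<lambda>k y. 2 * (PD - PF) * (2 * y - 1) * (1 - 2 * pe k)"]
  by (simp add: algebra_simps)

lemma not_equiv_stat_Wu_low_LRT_low:
  assumes "PF < PD" and "i < K" "j < K" "pe i \<noteq> pe j"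
  shows "\<not> equiv_stat K (Wu_low K PF pe) (LRT_low K PD PF pe)"
proof
  assume "equiv_stat K (Wu_low K PF pe) (LRT_low K PD PF pe)"
  then obtain a where "a \<noteq> 0" and incr: "\<And>i. i < K \<Longrightarrow>
      (1 + 2 * pe i) / real K = a * (4 * (PD - PF) * (1 - 2 * pe i))"
    by (rule equiv_stat_increments) (simp add: Wu_low_increment LRT_low_increment)
  have "K > 0" using \<open>i < K\<close> by simp
  define c where "c = 4 * a * (PD - PF) * real K"
  have weight: "1 + 2 * pe l = c * (1 - 2 * pe l)" if "l < K" for l
    using incr[OF that] \<open>K > 0\<close> unfolding c_def by (simp add: field_simps)
  have "(1 + 2 * pe i) * (1 - 2 * pe j) = (1 + 2 * pe j) * (1 - 2 * pe i)"
    using weight[OF \<open>i < K\<close>] weight[OF \<open>j < K\<close>] by simp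
  then have "pe i = pe j" by (simp add: algebra_simps)
  with \<open>pe i \<noteq> pe j\<close> show False ..
qed

theorem proposition1:
  fixes K :: nat and PD PF :: real and pe :: "nat \<Rightarrow> real"
  assumes "K \<ge> 1"
    and "0 \<le> PF" and "PF < PD" and "PD \<le> 1"
    and "\<forall>k<K. 0 < pe k \<and> pe k \<le> 1/2"
  shows "equiv_stat K (IS_low K pe) (LRT_low K PD PF pe)
       \<and> equiv_stat K (LOD_low K PF pe) (LRT_low K PD PF pe)
       \<and> ((\<exists>i<K. \<exists>j<K. pe i \<noteq> pe j) \<longrightarrow> \<not> equiv_stat K (Wu_low K PF pe) (LRT_low K PD PF pe))"
proof -
  have d: "PD - PF \<noteq> 0" using assms by simp
  have IS: "IS_low K pe y = (1 / (PD - PF)) * LRT_low K PD PF pe y" for y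
    using d by (simp add: LRT_low_eq_scaled_IS_low)
  have "PF \<le> 1" using assms by simp
  obtain c where "c \<noteq> 0" and LOD: "\<And>y. LOD_low K PF pe y = c * IS_low K pe y"
    using LOD_low_scaled_IS_low[OF \<open>0 \<le> PF\<close> \<open>PF \<le> 1\<close>] assms(5) by blast
  have "equiv_stat K (IS_low K pe) (LRT_low K PD PF pe)"
    using d IS by (intro equiv_stat_scaled[of "1 / (PD - PF)"]) auto
  moreover have "equiv_stat K (LOD_low K PF pe) (LRT_low K PD PF pe)"
    using d \<open>c \<noteq> 0\<close> by (intro equiv_stat_scaled[of "c / (PD - PF)"]) (auto simp: LOD IS)
  moreover have "\<not> equiv_stat K (Wu_low K PF pe) (LRT_low K PD PF pe)"
    if "\<exists>i<K. \<exists>j<K. pe i \<noteq> pe j"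
    using that not_equiv_stat_Wu_low_LRT_low[OF \<open>PF < PD\<close>] by blast
  ultimately show ?thesis by blast
qed

end
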